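(* Let $d\ge5$ and $k=k_0(d)$, where $k_0(d)=(d+1)/2$ if $d$ is odd and $k_0(d)=d/2+1$ if $d$ is even. Then for every $x>1$, $$\frac{(x+1)f'(x)}{k}<\big(1+\eta(x)\big)f(x).$$
   Context: $f(x)=\binom dk^{-1}\sum_{i=0}^{d-k}\binom ki\binom{d-k}{i}x^{k-i}$ and $\eta(x)=\dfrac{2k-d}{d-k+\sqrt{(d-k)^2+d(2k-d)f(x)}}$. *)

theory Defs
  imports "HOL-Analysis.Analysis"
begin

definition fpoly :: "nat \<Rightarrow> nat \<Rightarrow> real \<Rightarrow> real" where
  "fpoly d k x = (\<Sum>i=0..d-k. real (k choose i) * real ((d-k) choose i) * x ^ (k-i)) / real (d choose k)"

definition eta :: "nat \<Rightarrow> nat \<Rightarrow> real \<Rightarrow> real" where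
  "eta d k x = (2 * real k - real d) /
     (real d - real k + sqrt ((real d - real k)^2 + real d * (2 * real k - real d) * fpoly d k x))"

definition k0 :: "nat \<Rightarrow> nat" where
  "k0 d = (if odd d then (d + 1) div 2 else d div 2 + 1)"

end

(* Expanding around x = 1 turns f and the excess (x + 1) f'(x) / k - f(x) into polynomials in
   y = x - 1 whose coefficients are products of binomial coefficients; all coefficients of the
   excess beyond the lowest few are nonpositive. Bounding the square root in eta by AM-GM reduces
   the claim to a polynomial inequality between the two expansions. For odd d only the constant
   term of the excess survives and the inequality comes down to f(x) > 1. For even d the excess
   is bounded by its terms of degree 0, 1 and 3 and f from below by its terms of degree 0, 1 and 2;
   after dividing by the central binomial coefficient (2n choose n), n = d/2 - 1, what remains is
   an explicit inequality in n and y. *)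

theory Submission
  imports Defs
begin

section \<open>Expansion around x = 1\<close>

text \<open>With \<open>n = d - k\<close>, \<open>(d choose k) * f(x) = shifted_poly n k (x - 1)\<close> and
  \<open>(d choose k) * ((x + 1) * f'(x) / k - f(x)) = excess_poly n (k - 1) (x - 1)\<close>.\<close>

definition shifted_coeff :: "nat \<Rightarrow> nat \<Rightarrow> nat \<Rightarrow> real" where
  "shifted_coeff n k j = real (k choose j) * real ((k - j + n) choose n)"

definition shifted_poly :: "nat \<Rightarrow> nat \<Rightarrow> real \<Rightarrow> real" where
  "shifted_poly n k y = (\<Sum>j\<le>k. shifted_coeff n k j * y ^ j)"

definition excess_coeff :: "nat \<Rightarrow> nat \<Rightarrow> nat \<Rightarrow> real" where
  "excess_coeff n m j =
     real (m choose j) * (2 * real ((m - j + n) choose n) - real ((Suc m - j + n) choose n))"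

definition excess_poly :: "nat \<Rightarrow> nat \<Rightarrow> real \<Rightarrow> real" where
  "excess_poly n m y = (\<Sum>j\<le>m. excess_coeff n m j * y ^ j)"

lemma choose_mult_comm:
  "(k choose i) * ((k - i) choose j) = (k choose j) * ((k - j) choose i)"
proof (cases "i + j \<le> k")
  case True
  have "(k choose (i + j)) * ((i + j) choose i) = (k choose i) * ((k - i) choose j)"
    using choose_mult[of i "i + j" k] True by simp
  moreover have "(k choose (i + j)) * ((i + j) choose j) = (k choose j) * ((k - j) choose i)"
    using choose_mult[of j "i + j" k] True by simp
  moreover have "(i + j) choose i = (i + j) choose j"
    using binomial_symmetric[of i "i + j"] by simp
  ultimately show ?thesis by simp
next
  case False
  then show ?thesis
    by (cases "i \<le> k"; cases "j \<le> k") (auto simp: binomial_eq_0)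
qed

lemma sum_choose_choose_choose:
  assumes "j \<le> k"
  shows "(\<Sum>i\<le>n. (k choose i) * (n choose i) * ((k - i) choose j))
       = (k choose j) * ((k - j + n) choose n)"
proof -
  have "(\<Sum>i\<le>n. (k choose i) * (n choose i) * ((k - i) choose j))
      = (\<Sum>i\<le>n. (k choose j) * (((k - j) choose i) * (n choose (n - i))))"
  proof (rule sum.cong[OF refl])
    fix i assume "i \<in> {..n}"
    then have "n choose (n - i) = n choose i" using binomial_symmetric[of i n] by simp
    then show "(k choose i) * (n choose i) * ((k - i) choose j)
             = (k choose j) * (((k - j) choose i) * (n choose (n - i)))"
      using choose_mult_comm[of k i j] by (simp add: mult_ac)
  qed
  also have "\<dots> = (k choose j) * ((k - j + n) choose n)"
    by (simp add: sum_distrib_left[symmetric] vandermonde)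
  finally show ?thesis .
qed

lemma sum_choose_choose_power_eq_shifted_poly:
  fixes x :: real
  shows "(\<Sum>i=0..n. real (k choose i) * real (n choose i) * x ^ (k - i)) = shifted_poly n k (x - 1)"
proof -
  have binomial_x: "x ^ (k - i) = (\<Sum>j\<le>k. real ((k - i) choose j) * (x - 1) ^ j)" for i
  proof -
    have "x ^ (k - i) = ((x - 1) + 1) ^ (k - i)" by simp
    also have "\<dots> = (\<Sum>j\<le>k - i. real ((k - i) choose j) * (x - 1) ^ j)"
      by (subst binomial_ring) simp
    also have "\<dots> = (\<Sum>j\<le>k. real ((k - i) choose j) * (x - 1) ^ j)"
      by (rule sum.mono_neutral_left) (auto simp: binomial_eq_0)
    finally show ?thesis .
  qed
  have "(\<Sum>i=0..n. real (k choose i) * real (n choose i) * x ^ (k - i))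
      = (\<Sum>i\<le>n. \<Sum>j\<le>k. real ((k choose i) * (n choose i) * ((k - i) choose j)) * (x - 1) ^ j)"
    by (simp add: atLeast0AtMost binomial_x sum_distrib_left mult_ac)
  also have "\<dots> = (\<Sum>j\<le>k. real (\<Sum>i\<le>n. (k choose i) * (n choose i) * ((k - i) choose j)) * (x - 1) ^ j)"
    by (subst sum.swap) (simp add: sum_distrib_right)
  also have "\<dots> = shifted_poly n k (x - 1)"
    unfolding shifted_poly_def shifted_coeff_def
    by (rule sum.cong[OF refl]) (simp add: sum_choose_choose_choose)
  finally show ?thesis .
qed

lemma fpoly_eq_shifted_poly:
  "fpoly d k x = shifted_poly (d - k) k (x - 1) / real (d choose k)"
  unfolding fpoly_def sum_choose_choose_power_eq_shifted_poly ..

lemma shifted_poly_Suc: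
  "shifted_poly n (Suc m) y
     = (\<Sum>j\<le>m. real (m choose j) * real ((Suc m - j + n) choose n) * y ^ j) + y * shifted_poly n m y"
proof -
  let ?g = "\<lambda>j. real (m choose j) * real ((Suc m - j + n) choose n) * y ^ j"
  have "(\<Sum>j\<le>m. ?g j) = (\<Sum>j\<le>Suc m. ?g j)" by simp
  also have "\<dots> = ?g 0 + (\<Sum>j\<le>m. ?g (Suc j))" by (rule sum.atMost_Suc_shift)
  finally have tail: "(\<Sum>j\<le>m. ?g j)
     = real ((Suc m + n) choose n) + (\<Sum>j\<le>m. real (m choose Suc j) * real ((m - j + n) choose n) * y ^ Suc j)"
    by simp
  show ?thesis
    unfolding shifted_poly_def shifted_coeff_def tail
    by (subst sum.atMost_Suc_shift) (simp add: sum.distrib sum_distrib_left algebra_simps)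
qed

lemma has_real_derivative_shifted_poly:
  "(shifted_poly n (Suc m) has_real_derivative real (Suc m) * shifted_poly n m y) (at y)"
proof -
  have "(shifted_poly n (Suc m) has_real_derivative
          (\<Sum>j\<le>Suc m. shifted_coeff n (Suc m) j * (real j * y ^ (j - 1)))) (at y)"
    unfolding shifted_poly_def[abs_def] by (intro DERIV_sum DERIV_cmult) (simp add: DERIV_pow)
  also have "(\<Sum>j\<le>Suc m. shifted_coeff n (Suc m) j * (real j * y ^ (j - 1)))
           = (\<Sum>j\<le>m. real (Suc j * (Suc m choose Suc j)) * real ((m - j + n) choose n) * y ^ j)"
    unfolding shifted_coeff_def by (subst sum.atMost_Suc_shift) (simp add: algebra_simps)
  also have "\<dots> = real (Suc m) * shifted_poly n m y"
    unfolding shifted_poly_def shifted_coeff_def Suc_times_binomial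
    by (simp add: sum_distrib_left algebra_simps)
  finally show ?thesis .
qed

lemma deriv_fpoly:
  assumes "0 < k"
  shows "deriv (fpoly d k) x = real k * shifted_poly (d - k) (k - 1) (x - 1) / real (d choose k)"
proof -
  obtain m where k: "k = Suc m" using assms by (cases k) auto
  have "((\<lambda>x. shifted_poly (d - k) (Suc m) (x - 1)) has_real_derivative
          real (Suc m) * shifted_poly (d - k) m (x - 1) * 1) (at x)"
    by (rule DERIV_chain2[OF has_real_derivative_shifted_poly]) (auto intro!: derivative_eq_intros)
  then have "((\<lambda>x. shifted_poly (d - k) k (x - 1) / real (d choose k)) has_real_derivative
          real k * shifted_poly (d - k) (k - 1) (x - 1) / real (d choose k)) (at x)"
    unfolding k by (intro DERIV_cdivide) simp
  then show ?thesis
    by (intro DERIV_imp_deriv) (simp only: fpoly_eq_shifted_poly[abs_def])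
qed

lemma excess_poly_eq:
  "excess_poly n m y = (2 + y) * shifted_poly n m y - shifted_poly n (Suc m) y"
proof -
  let ?T = "\<lambda>j. real (m choose j) * real ((Suc m - j + n) choose n) * y ^ j"
  have "excess_poly n m y = (\<Sum>j\<le>m. 2 * (shifted_coeff n m j * y ^ j) - ?T j)"
    unfolding excess_poly_def excess_coeff_def shifted_coeff_def
    by (simp add: algebra_simps)
  also have "\<dots> = 2 * shifted_poly n m y - (\<Sum>j\<le>m. ?T j)"
    by (simp add: sum_subtractf sum_distrib_left shifted_poly_def)
  also have "\<dots> = (2 + y) * shifted_poly n m y - shifted_poly n (Suc m) y"
    unfolding shifted_poly_Suc by (simp add: algebra_simps)
  finally show ?thesis .
qed

section \<open>Reduction to an inequality between the expanded polynomials\<close>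

lemma partial_sum_le_shifted_poly:
  assumes "A \<subseteq> {..k}" "0 \<le> y"
  shows "(\<Sum>j\<in>A. shifted_coeff n k j * y ^ j) \<le> shifted_poly n k y"
  unfolding shifted_poly_def using assms
  by (intro sum_mono2) (auto simp: shifted_coeff_def)

lemma shifted_coeff_0: "shifted_coeff n k 0 = real ((k + n) choose n)"
  by (simp add: shifted_coeff_def)

lemma shifted_poly_pos:
  assumes "0 \<le> y"
  shows "0 < shifted_poly n k y"
proof -
  have "real ((k + n) choose n) \<le> shifted_poly n k y"
    using partial_sum_le_shifted_poly[of "{0}" k y n] assms by (simp add: shifted_coeff_0)
  moreover have "0 < real ((k + n) choose n)" by simp
  ultimately show ?thesis by linarith
qed

lemma shifted_coeff_0_lt_shifted_poly:
  assumes "0 < k" "0 < y"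
  shows "shifted_coeff n k 0 < shifted_poly n k y"
proof -
  have "0 < shifted_coeff n k 1 * y"
    using assms by (simp add: shifted_coeff_def)
  moreover have "(\<Sum>j\<in>{0, 1}. shifted_coeff n k j * y ^ j) \<le> shifted_poly n k y"
    using assms by (intro partial_sum_le_shifted_poly) auto
  ultimately show ?thesis by simp
qed

lemma double_choose_le_choose_Suc:
  assumes "Suc M \<le> 2 * n" "1 \<le> n"
  shows "2 * (M choose n) \<le> Suc M choose n"
proof -
  obtain r where r: "n = Suc r" using assms(2) by (cases n) auto
  have "Suc r * (M choose Suc r) = (M - r) * (M choose r)"
    by (simp only: binomial_absorption binomial_absorb_comp)
  also have "\<dots> \<le> Suc r * (M choose r)"
    using assms r by (intro mult_right_mono) auto
  finally have "M choose Suc r \<le> M choose r"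
    using Suc_mult_le_cancel1 by blast
  then show ?thesis unfolding r binomial_Suc_Suc by linarith
qed

lemma excess_coeff_nonpos:
  assumes "1 \<le> n" "j \<le> m" "m < n + j"
  shows "excess_coeff n m j \<le> 0"
proof -
  have "2 * ((m - j + n) choose n) \<le> Suc (m - j + n) choose n"
    using assms by (intro double_choose_le_choose_Suc) auto
  then have "2 * real ((m - j + n) choose n) - real ((Suc m - j + n) choose n) \<le> 0"
    using assms(2) by (simp add: Suc_diff_le flip: of_nat_le_iff)
  then show ?thesis
    unfolding excess_coeff_def by (simp add: mult_nonneg_nonpos)
qed

lemma excess_poly_le_partial_sum:
  assumes "A \<subseteq> {..m}" and "\<And>j. j \<le> m \<Longrightarrow> j \<notin> A \<Longrightarrow> m < n + j"
    and "1 \<le> n" "0 \<le> y"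
  shows "excess_poly n m y \<le> (\<Sum>j\<in>A. excess_coeff n m j * y ^ j)"
proof -
  have "excess_poly n m y
      = (\<Sum>j\<in>{..m} - A. excess_coeff n m j * y ^ j) + (\<Sum>j\<in>A. excess_coeff n m j * y ^ j)"
    unfolding excess_poly_def using assms(1) by (simp add: sum.subset_diff)
  moreover have "(\<Sum>j\<in>{..m} - A. excess_coeff n m j * y ^ j) \<le> 0"
    using assms by (intro sum_nonpos mult_nonpos_nonneg excess_coeff_nonpos) auto
  ultimately show ?thesis by simp
qed

lemma eta_lower_bound:
  assumes "k \<le> d" "d < 2 * k" "0 < fpoly d k x"
  shows "2 * (2 * real k - real d) * real k / (real d * (real d + (2 * real k - real d) * fpoly d k x))
    \<le> eta d k x"
proof -
  define S where "S = 2 * real k - real d"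
  define Z where "Z = (real d - real k)^2 + real d * S * fpoly d k x"
  have S_pos: "0 < S" and k_pos: "0 < real k" and dk: "real k \<le> real d"
    unfolding S_def using assms by auto
  have Z_pos: "0 < Z"
    unfolding Z_def using S_pos k_pos dk assms(3) by (intro add_nonneg_pos mult_pos_pos) auto
  \<comment> \<open>AM-GM; the bound simplifies since \<open>(d - k)^2 + 2k(d - k) + k^2 = d^2\<close>.\<close>
  have "2 * real k * sqrt Z \<le> Z + (real k)^2"
    using zero_le_power2[of "sqrt Z - real k"] Z_pos by (simp add: power2_eq_square algebra_simps)
  then have "real d - real k + sqrt Z \<le> real d - real k + (Z + (real k)^2) / (2 * real k)"
    using k_pos by (simp add: field_simps)
  also have "\<dots> = real d * (real d + S * fpoly d k x) / (2 * real k)"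
    unfolding Z_def using k_pos by (simp add: field_simps power2_eq_square)
  finally have den: "real d - real k + sqrt Z \<le> real d * (real d + S * fpoly d k x) / (2 * real k)" .
  have D_pos: "0 < real d - real k + sqrt Z" using dk Z_pos by (simp add: add_nonneg_pos)
  then have "0 < real d * (real d + S * fpoly d k x) / (2 * real k) * (real d - real k + sqrt Z)"
    using den by (intro mult_pos_pos) auto
  then have "S / (real d * (real d + S * fpoly d k x) / (2 * real k)) \<le> S / (real d - real k + sqrt Z)"
    using den S_pos by (intro divide_left_mono) auto
  then show ?thesis
    unfolding eta_def S_def[symmetric] Z_def[symmetric] using k_pos by (simp add: field_simps)
qed

lemma fpoly_deriv_ineq_of_excess_ineq:
  assumes k: "0 < k" "k \<le> d" "d < 2 * k" and x: "1 < x"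
  defines "C \<equiv> real (d choose k)" and "P \<equiv> shifted_poly (d - k) k (x - 1)"
    and "S \<equiv> 2 * real k - real d"
  assumes excess: "excess_poly (d - k) (k - 1) (x - 1) * real d * (real d * C + S * P) < 2 * S * real k * C * P"
  shows "(x + 1) * deriv (fpoly d k) x / real k < (1 + eta d k x) * fpoly d k x"
proof -
  define H where "H = excess_poly (d - k) (k - 1) (x - 1)"
  have C_pos: "0 < C" unfolding C_def using k by simp
  have P_pos: "0 < P" unfolding P_def using x by (intro shifted_poly_pos) simp
  have f: "fpoly d k x = P / C" unfolding P_def C_def by (rule fpoly_eq_shifted_poly)
  have "(x + 1) * deriv (fpoly d k) x / real k = (2 + (x - 1)) * shifted_poly (d - k) (k - 1) (x - 1) / C"
    unfolding deriv_fpoly[OF k(1)] C_def using k(1) by simp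
  also have "\<dots> = (H + P) / C"
    using excess_poly_eq[of "d - k" "k - 1" "x - 1"] k(1) unfolding H_def P_def by simp
  finally have lhs: "(x + 1) * deriv (fpoly d k) x / real k = H / C + P / C"
    by (simp add: add_divide_distrib)
  have pos: "0 < real d * (real d * C + S * P)"
    unfolding S_def using k C_pos P_pos by (intro mult_pos_pos add_pos_pos) auto
  have "H < 2 * S * real k * C * P / (real d * (real d * C + S * P))"
    using excess pos unfolding H_def by (simp add: pos_less_divide_eq mult_ac)
  also have "\<dots> = 2 * S * real k / (real d * (real d + S * fpoly d k x)) * P"
    unfolding f using C_pos by (simp add: field_simps)
  also have "\<dots> \<le> eta d k x * P"
    using eta_lower_bound[of k d x] k P_pos C_pos unfolding S_def f
    by (intro mult_right_mono) auto
  finally have "H / C < eta d k x * (P / C)"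
    using C_pos by (simp add: divide_strict_right_mono)
  then show ?thesis unfolding lhs f by (simp add: algebra_simps)
qed

lemma choose_central_shift_symmetric: "(2*n + j) choose (n + j) = (2*n + j) choose n"
  by (subst binomial_symmetric[of n]) simp_all

lemma choose_odd_central:
  "(real n + 1) * real ((2*n+1) choose n) = (2 * real n + 1) * real ((2*n) choose n)"
proof -
  have "(n + 1) * ((2*n+1) choose n) = (2*n+1) * ((2*n) choose n)"
    using binomial_absorb_comp[of "2*n+1" n] by (simp add: Suc_diff_le)
  then have "real ((n + 1) * ((2*n+1) choose n)) = real ((2*n+1) * ((2*n) choose n))"
    by (rule arg_cong)
  then show ?thesis by (simp add: algebra_simps)
qed

lemma choose_even_central:
  "(real n + 2) * real ((2*n+2) choose n) = 2 * (2 * real n + 1) * real ((2*n) choose n)"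
proof -
  have "(n + 2) * ((2*n+2) choose n) = 2 * ((n + 1) * ((2*n+1) choose n))"
    using binomial_absorb_comp[of "2*n+2" n] by (simp add: Suc_diff_le)
  then have "real ((n + 2) * ((2*n+2) choose n)) = real (2 * ((n + 1) * ((2*n+1) choose n)))"
    by (rule arg_cong)
  then have "(real n + 2) * real ((2*n+2) choose n) = 2 * ((real n + 1) * real ((2*n+1) choose n))"
    by (simp add: algebra_simps)
  then show ?thesis unfolding choose_odd_central by simp
qed

lemma choose_pred_central:
  assumes "1 \<le> n"
  shows "2 * real ((2*n-1) choose n) = real ((2*n) choose n)"
proof -
  obtain r where r: "n = Suc r" using assms by (cases n) auto
  have "(2*n) choose n = ((2*n-1) choose r) + ((2*n-1) choose n)"
    using binomial_Suc_Suc[of "2*n-1" r] r by simp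
  moreover have "(2*n-1) choose r = (2*n-1) choose n"
    using binomial_symmetric[of r "2*n-1"] r by simp
  ultimately show ?thesis by simp
qed

lemma choose_pred2_central:
  assumes "1 \<le> n"
  shows "(2 * real n - 1) * real ((2*n-2) choose n) = (real n - 1) * real ((2*n-1) choose n)"
proof -
  have "2*n-1-n = n-1" "2*n-1-1 = 2*n-2" using assms by auto
  then have "(n - 1) * ((2*n-1) choose n) = (2*n-1) * ((2*n-2) choose n)"
    using binomial_absorb_comp[of "2*n-1" n] by (simp only:)
  then have "real ((n - 1) * ((2*n-1) choose n)) = real ((2*n-1) * ((2*n-2) choose n))"
    by (rule arg_cong)
  then show ?thesis using assms by (simp add: of_nat_diff)
qed

lemma six_times_choose_3:
  "6 * real (Suc n choose 3) = (real n + 1) * real n * (real n - 1)"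
proof -
  have "3 * (Suc n choose 3) = Suc n * (n choose 2)"
    using binomial_absorption[of 2 "Suc n"] by (simp add: numeral_eq_Suc)
  moreover have "2 * (n choose 2) = n * (n - 1)"
    using binomial_absorption[of 1 n] by (simp add: numeral_eq_Suc)
  ultimately have "6 * (Suc n choose 3) = Suc n * (n * (n - 1))"
    by (simp only: mult.left_commute[of _ 2] flip: \<open>2 * (n choose 2) = n * (n - 1)\<close>)
  then have "real (6 * (Suc n choose 3)) = real (Suc n * (n * (n - 1)))" by (rule arg_cong)
  then show ?thesis by (cases n) (simp_all add: algebra_simps)
qed

section \<open>Odd \<open>d = 2n + 1\<close>\<close>

lemma excess_coeff_odd_0:
  "excess_coeff n n 0 = real ((2*n+1) choose (n+1)) / (2 * real n + 1)"
proof -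
  define u where "u = real ((2*n+1) choose n)"
  define c where "c = real ((2*n) choose n)"
  have "excess_coeff n n 0 = 2 * c - u"
    unfolding u_def c_def by (simp add: excess_coeff_def flip: mult_2)
  also have "\<dots> = u / (2 * real n + 1)"
    using choose_odd_central[of n] unfolding u_def[symmetric] c_def[symmetric]
    by (simp add: field_simps)
  finally show ?thesis unfolding u_def choose_central_shift_symmetric .
qed

lemma shifted_coeff_odd_0:
  "shifted_coeff n (n+1) 0 = real ((2*n+1) choose (n+1))"
  unfolding choose_central_shift_symmetric by (simp add: shifted_coeff_0 flip: mult_2)

lemma excess_poly_odd_le:
  assumes "1 \<le> n" "0 \<le> y"
  shows "excess_poly n n y * (2 * real n + 1) \<le> real ((2*n+1) choose (n+1))"
proof -
  have "excess_poly n n y \<le> (\<Sum>j\<in>{0}. excess_coeff n n j * y ^ j)"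
    using assms by (intro excess_poly_le_partial_sum) auto
  then show ?thesis by (simp add: excess_coeff_odd_0 field_simps)
qed

lemma excess_poly_odd_ineq:
  fixes n :: nat and y :: real
  assumes n: "1 \<le> n" and y: "0 < y"
  defines "C \<equiv> real ((2*n+1) choose (n+1))" and "P \<equiv> shifted_poly n (n+1) y"
  shows "excess_poly n n y * (2 * real n + 1) * ((2 * real n + 1) * C + P) < 2 * (real n + 1) * C * P"
proof -
  have "0 < (2*n+1) choose (n+1)" by (rule zero_less_binomial) simp
  then have C_pos: "0 < C" unfolding C_def by (simp only: of_nat_0_less_iff)
  have C_lt_P: "C < P"
    using shifted_coeff_0_lt_shifted_poly[of "n+1" y n] y
    unfolding C_def P_def shifted_coeff_odd_0 by simp
  have "excess_poly n n y * (2 * real n + 1) * ((2 * real n + 1) * C + P) \<le> C * ((2 * real n + 1) * C + P)"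
    using excess_poly_odd_le[OF n less_imp_le[OF y]] C_pos C_lt_P unfolding C_def
    by (intro mult_right_mono) auto
  also have "\<dots> < C * (2 * (real n + 1) * P)"
  proof -
    have "(2 * real n + 1) * C < (2 * real n + 1) * P" using C_lt_P by simp
    then have "(2 * real n + 1) * C + P < 2 * (real n + 1) * P" by (simp add: algebra_simps)
    then show ?thesis using C_pos by simp
  qed
  finally show ?thesis by (simp add: algebra_simps)
qed

section \<open>Even \<open>d = 2n + 2\<close>\<close>

lemma shifted_coeffs_even:
  fixes n :: nat
  defines "c \<equiv> real ((2*n) choose n)"
  shows "shifted_coeff n (n+2) 0 = 2 * (2 * real n + 1) / (real n + 2) * c"
    and "shifted_coeff n (n+2) 1 = (2 * real n + 1) * (real n + 2) / (real n + 1) * c"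
    and "shifted_coeff n (n+2) 2 = (real n + 2) * (real n + 1) / 2 * c"
proof -
  define u where "u = real ((2*n+1) choose n)"
  define V where "V = real ((2*n+2) choose n)"
  have "(real n + 1) * u = (2 * real n + 1) * c" "(real n + 2) * V = 2 * (2 * real n + 1) * c"
    unfolding u_def V_def c_def by (rule choose_odd_central choose_even_central)+
  then have u: "u = (2 * real n + 1) / (real n + 1) * c" and V: "V = 2 * (2 * real n + 1) / (real n + 2) * c"
    by (simp_all add: field_simps)
  have "shifted_coeff n (n+2) 0 = V"
    unfolding V_def by (simp add: shifted_coeff_0 flip: mult_2)
  then show "shifted_coeff n (n+2) 0 = 2 * (2 * real n + 1) / (real n + 2) * c"
    using V by (simp add: field_simps)
  have "shifted_coeff n (n+2) 1 = (real n + 2) * u"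
    unfolding u_def by (simp add: shifted_coeff_def flip: mult_2)
  then show "shifted_coeff n (n+2) 1 = (2 * real n + 1) * (real n + 2) / (real n + 1) * c"
    using u by (simp add: field_simps)
  have "2 * ((n+2) choose 2) = (n+2) * (n+1)"
    using binomial_absorption[of 1 "n+2"] by (simp add: numeral_eq_Suc)
  then have "real (2 * ((n+2) choose 2)) = real ((n+2) * (n+1))" by (rule arg_cong)
  then have "2 * real ((n+2) choose 2) = (real n + 2) * (real n + 1)" by (simp add: algebra_simps)
  moreover have "shifted_coeff n (n+2) 2 = real ((n+2) choose 2) * c"
    unfolding c_def by (simp add: shifted_coeff_def flip: mult_2)
  ultimately show "shifted_coeff n (n+2) 2 = (real n + 2) * (real n + 1) / 2 * c"
    by (simp add: field_simps)
qed

lemma excess_coeffs_even: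
  fixes n :: nat
  defines "c \<equiv> real ((2*n) choose n)"
  shows "excess_coeff n (n+1) 0 = 2 * (2 * real n + 1) / ((real n + 1) * (real n + 2)) * c"
    and "excess_coeff n (n+1) 1 = c"
proof -
  define u where "u = real ((2*n+1) choose n)"
  define V where "V = real ((2*n+2) choose n)"
  have u_rel: "(real n + 1) * u = (2 * real n + 1) * c"
    and V_rel: "(real n + 2) * V = 2 * (2 * real n + 1) * c"
    unfolding u_def V_def c_def by (rule choose_odd_central choose_even_central)+
  then have u: "u = (2 * real n + 1) / (real n + 1) * c" and V: "V = 2 * (2 * real n + 1) / (real n + 2) * c"
    by (simp_all add: field_simps)
  have "excess_coeff n (n+1) 0 = 2 * u - V"
    unfolding u_def V_def by (simp add: excess_coeff_def flip: mult_2)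
  then show "excess_coeff n (n+1) 0 = 2 * (2 * real n + 1) / ((real n + 1) * (real n + 2)) * c"
    using u V by (simp add: field_simps)
  have "excess_coeff n (n+1) 1 = (real n + 1) * (2 * c - u)"
    unfolding u_def c_def by (simp add: excess_coeff_def flip: mult_2)
  then show "excess_coeff n (n+1) 1 = c"
    using u_rel by (simp add: algebra_simps)
qed

lemma excess_coeff_even_3:
  fixes n :: nat
  assumes "2 \<le> n"
  shows "excess_coeff n (n+1) 3
    = - ((real n + 1) * real n * (real n - 1) / (12 * (2 * real n - 1))) * real ((2*n) choose n)"
proof -
  define w1 where "w1 = real ((2*n-1) choose n)"
  define w2 where "w2 = real ((2*n-2) choose n)"
  define t where "t = real (Suc n choose 3)"
  have "2 * w1 = real ((2*n) choose n)"
    unfolding w1_def by (rule choose_pred_central) (use assms in simp)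
  then have w1: "w1 = real ((2*n) choose n) / 2" by simp
  have "(2 * real n - 1) * w2 = (real n - 1) * w1"
    unfolding w1_def w2_def by (rule choose_pred2_central) (use assms in simp)
  moreover have nz: "2 * real n - 1 \<noteq> 0" using assms by simp
  ultimately have w2: "w2 = (real n - 1) / (2 * real n - 1) * w1"
    by (simp add: field_simps)
  have "6 * t = (real n + 1) * real n * (real n - 1)"
    unfolding t_def by (rule six_times_choose_3)
  then have t: "t = (real n + 1) * real n * (real n - 1) / 6" by simp
  have "n + 1 - 3 + n = 2*n-2" "Suc (n + 1) - 3 + n = 2*n-1" using assms by auto
  then have "excess_coeff n (n+1) 3 = t * (2 * w2 - w1)"
    unfolding t_def w1_def w2_def by (simp add: excess_coeff_def)
  also have "\<dots> = - ((real n + 1) * real n * (real n - 1) / (12 * (2 * real n - 1))) * real ((2*n) choose n)"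
    using nz unfolding t w2 w1 by (simp add: field_simps)
  finally show ?thesis .
qed

lemma excess_poly_even_le:
  fixes n :: nat
  assumes "2 \<le> n" "0 \<le> y"
  shows "excess_poly n (n+1) y \<le> real ((2*n) choose n) *
     (2 * (2 * real n + 1) / ((real n + 1) * (real n + 2)) + y
        - (real n + 1) * real n * (real n - 1) / (12 * (2 * real n - 1)) * y ^ 3)"
proof -
  \<comment> \<open>The negative cubic term is kept: without it the bound is too weak for large \<open>y\<close>.\<close>
  have "excess_poly n (n+1) y \<le> (\<Sum>j\<in>{0, 1, 3}. excess_coeff n (n+1) j * y ^ j)"
    using assms by (intro excess_poly_le_partial_sum) auto
  also have "\<dots> = excess_coeff n (n+1) 0 + excess_coeff n (n+1) 1 * y + excess_coeff n (n+1) 3 * y ^ 3"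
    by simp
  also have "\<dots> = real ((2*n) choose n) *
     (2 * (2 * real n + 1) / ((real n + 1) * (real n + 2)) + y
        - (real n + 1) * real n * (real n - 1) / (12 * (2 * real n - 1)) * y ^ 3)"
    unfolding excess_coeffs_even excess_coeff_even_3[OF assms(1)] by (simp add: algebra_simps)
  finally show ?thesis .
qed

lemma shifted_poly_even_ge:
  fixes n :: nat
  assumes "0 \<le> y"
  shows "real ((2*n) choose n) * (2 * (2 * real n + 1) / (real n + 2)
      + (2 * real n + 1) * (real n + 2) / (real n + 1) * y + (real n + 2) * (real n + 1) / 2 * y ^ 2)
    \<le> shifted_poly n (n+2) y"
proof -
  have "real ((2*n) choose n) * (2 * (2 * real n + 1) / (real n + 2)
      + (2 * real n + 1) * (real n + 2) / (real n + 1) * y + (real n + 2) * (real n + 1) / 2 * y ^ 2)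
      = shifted_coeff n (n+2) 0 + shifted_coeff n (n+2) 1 * y + shifted_coeff n (n+2) 2 * y ^ 2"
    unfolding shifted_coeffs_even by (simp add: algebra_simps)
  also have "\<dots> = (\<Sum>j\<in>{0, 1, 2}. shifted_coeff n (n+2) j * y ^ j)"
    by simp
  also have "\<dots> \<le> shifted_poly n (n+2) y"
    using assms by (intro partial_sum_le_shifted_poly) auto
  finally show ?thesis .
qed

lemma even_case_coefficient_ineqs:
  fixes n :: nat and Cc a1 a2 E :: real
  assumes n: "3 \<le> n"
    and Cc: "Cc = 2 * (2 * real n + 1) / (real n + 2)"
    and a1: "a1 = (2 * real n + 1) * (real n + 2) / (real n + 1)"
    and a2: "a2 = (real n + 2) * (real n + 1) / 2"
    and E: "E = (real n + 1) * real n * (real n - 1) / (12 * (2 * real n - 1))"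
  shows "a1 \<le> Cc * a2" and "(real n + 2) * Cc + a2 / (4 * E) < Cc * a1"
proof -
  have n3: "3 \<le> real n" using n by simp
  have "(real n + 2) \<le> (real n + 1) * (real n + 1)"
    using n3 mult_mono[OF n3 n3] by (simp add: algebra_simps)
  then have "(2 * real n + 1) * (real n + 2) \<le> (2 * real n + 1) * ((real n + 1) * (real n + 1))"
    by (intro mult_left_mono) auto
  moreover have "Cc * a2 = (2 * real n + 1) * (real n + 1)"
    unfolding Cc a2 by (simp add: field_simps)
  ultimately show "a1 \<le> Cc * a2"
    unfolding a1 by (simp add: divide_le_eq mult.assoc)
  have "(real n + 2) * (2 * real n - 1) \<le> 5 * real n * (real n - 1)"
    using mult_right_mono[OF n3, of "real n"] by (simp add: algebra_simps)
  then have "(real n + 1) * ((real n + 2) * (2 * real n - 1)) \<le> (real n + 1) * (5 * real n * (real n - 1))"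
    by (intro mult_left_mono) auto
  then have "a2 \<le> 15 / 2 * (4 * E)"
    unfolding a2 E using n3 by (simp add: field_simps)
  moreover have "0 < E" using n3 unfolding E by simp
  ultimately have "a2 / (4 * E) \<le> 15 / 2"
    by (simp add: divide_le_eq)
  also have "\<dots> < 2 * (2 * real n + 1) * real n / (real n + 1)"
    using n3 by (simp add: field_simps) (use mult_right_mono[OF n3, of "real n"] in linarith)
  also have "\<dots> = Cc * a1 - (real n + 2) * Cc"
    unfolding Cc a1 by (simp add: divide_simps) (simp add: algebra_simps)
  finally show "(real n + 2) * Cc + a2 / (4 * E) < Cc * a1" by simp
qed

lemma even_case_key_ineq:
  fixes n :: nat and y Cc a1 a2 E :: real
  assumes n: "2 \<le> n" and y: "0 < y"
    and Cc: "Cc = 2 * (2 * real n + 1) / (real n + 2)"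
    and a1: "a1 = (2 * real n + 1) * (real n + 2) / (real n + 1)"
    and a2: "a2 = (real n + 2) * (real n + 1) / 2"
    and E: "E = (real n + 1) * real n * (real n - 1) / (12 * (2 * real n - 1))"
  shows "(1 - E * y^2) * ((real n + 2) * Cc + a1 * y + a2 * y^2) < Cc * (a1 + a2 * y)"
proof (cases "n = 2")
  case True
  \<comment> \<open>Here the estimate \<open>(1 - E y^2) y^2 \<le> 1 / (4 E)\<close> of the other case is too weak.\<close>
  have "Cc * (a1 + a2 * y) - (1 - E * y^2) * ((real n + 2) * Cc + a1 * y + a2 * y^2)
      = (y^2 - 13/6)^2 + 10/9 * y^3 + 25/3 * y + 71/36"
    unfolding Cc a1 a2 E True by (simp add: field_simps power2_eq_square power3_eq_cube)
  moreover have "0 < (y^2 - 13/6)^2 + 10/9 * y^3 + 25/3 * y + 71/36"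
    using y by (intro add_pos_pos add_nonneg_pos add_nonneg_nonneg) auto
  ultimately show ?thesis by linarith
next
  case False
  then have n3: "3 \<le> n" using n by simp
  note coeff_ineqs = even_case_coefficient_ineqs[OF n3 Cc a1 a2 E]
  define p where "p = 1 - E * y^2"
  have E_pos: "0 < E" using n3 unfolding E by simp
  have Cc_pos: "0 < Cc" and a1_pos: "0 < a1" and a2_pos: "0 < a2"
    unfolding Cc a1 a2 by simp_all
  have p_le: "p \<le> 1" unfolding p_def using E_pos by simp
  have "4 * E * (p * y^2) \<le> 1"
    using zero_le_power2[of "1 - 2 * E * y^2"]
    unfolding p_def by (simp add: algebra_simps power2_eq_square)
  then have "p * y^2 \<le> 1 / (4 * E)"
    using E_pos by (simp add: field_simps)
  then have py2: "a2 * (p * y^2) \<le> a2 / (4 * E)"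
    using mult_left_mono[of "p * y^2" "1 / (4 * E)" a2] a2_pos by simp
  have "p * ((real n + 2) * Cc + a1 * y + a2 * y^2) = (real n + 2) * Cc * p + a1 * y * p + a2 * (p * y^2)"
    by (simp add: algebra_simps)
  also have "\<dots> \<le> (real n + 2) * Cc + a1 * y + a2 / (4 * E)"
    using p_le Cc_pos a1_pos y py2 by (intro add_mono mult_left_le) auto
  also have "\<dots> < Cc * a1 + Cc * a2 * y"
    using coeff_ineqs(2) mult_right_mono[OF coeff_ineqs(1), of y] y by linarith
  also have "\<dots> = Cc * (a1 + a2 * y)"
    by (simp add: algebra_simps)
  finally show ?thesis unfolding p_def .
qed

lemma even_case_normalized_ineq:
  fixes n :: nat and y h F Cc a1 a2 E :: real
  assumes n: "2 \<le> n" and y: "0 < y"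
    and Cc: "Cc = 2 * (2 * real n + 1) / (real n + 2)"
    and a1: "a1 = (2 * real n + 1) * (real n + 2) / (real n + 1)"
    and a2: "a2 = (real n + 2) * (real n + 1) / 2"
    and E: "E = (real n + 1) * real n * (real n - 1) / (12 * (2 * real n - 1))"
    and h: "h \<le> Cc / (real n + 1) + y - E * y^3"
    and F: "Cc + a1 * y + a2 * y^2 \<le> F"
  shows "h * (real n + 1) * ((real n + 1) * Cc + F) < (real n + 2) * Cc * F"
proof -
  define A where "A = (real n + 1) * Cc"
  define F0 where "F0 = Cc + a1 * y + a2 * y^2"
  define q where "q = (real n + 1) * (y - E * y^3)"
  have Cc_pos: "0 < Cc" and A_pos: "0 < A" and "0 < a1" "0 < a2"
    unfolding A_def Cc a1 a2 by simp_all
  then have F0_pos: "0 < A + F0" "Cc < F0"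
    unfolding F0_def using y by (simp_all add: add_pos_pos)
  have "(real n + 1) * y * ((1 - E * y^2) * ((real n + 2) * Cc + a1 * y + a2 * y^2))
      < (real n + 1) * y * (Cc * (a1 + a2 * y))"
    using even_case_key_ineq[OF n y Cc a1 a2 E] y by (intro mult_strict_left_mono) auto
  then have q_F0: "q * (A + F0) < (real n + 1) * Cc * (F0 - Cc)"
    unfolding q_def A_def F0_def by (simp add: algebra_simps power2_eq_square power3_eq_cube)
  have "(real n + 1) * Cc * (F0 - Cc) < (real n + 1) * Cc * (A + F0)"
    using A_pos Cc_pos by (intro mult_strict_left_mono) auto
  with q_F0 have "q * (A + F0) < (real n + 1) * Cc * (A + F0)" by linarith
  with F0_pos have q_lt: "q < (real n + 1) * Cc"
    by (auto intro: mult_right_less_imp_less)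
  have "q * (F - F0) \<le> (real n + 1) * Cc * (F - F0)"
    using q_lt F unfolding F0_def by (intro mult_right_mono) auto
  with q_F0 have q_F: "q * (A + F) < (real n + 1) * Cc * (F - Cc)"
    by (simp add: algebra_simps)
  have "h * (real n + 1) \<le> Cc + q"
    using h unfolding q_def by (simp add: field_simps)
  moreover have "0 < A + F" using A_pos F0_pos F unfolding F0_def by linarith
  ultimately have "h * (real n + 1) * (A + F) \<le> (Cc + q) * (A + F)"
    by (intro mult_right_mono) auto
  also have "\<dots> < (real n + 2) * Cc * F"
    using q_F unfolding A_def by (simp add: algebra_simps)
  finally show ?thesis unfolding A_def .
qed

lemma excess_poly_even_ineq:
  fixes n :: nat and y :: real
  assumes n: "2 \<le> n" and y: "0 < y"
  defines "C \<equiv> real ((2*n+2) choose (n+2))" and "P \<equiv> shifted_poly n (n+2) y"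
  shows "excess_poly n (n+1) y * (real n + 1) * ((real n + 1) * C + P) < (real n + 2) * C * P"
proof -
  define c where "c = real ((2*n) choose n)"
  define Cc where "Cc = 2 * (2 * real n + 1) / (real n + 2)"
  define a1 where "a1 = (2 * real n + 1) * (real n + 2) / (real n + 1)"
  define a2 where "a2 = (real n + 2) * (real n + 1) / 2"
  define E where "E = (real n + 1) * real n * (real n - 1) / (12 * (2 * real n - 1))"
  have c_pos: "0 < c" unfolding c_def by simp
  have "n + 2 + n = 2*n + 2" by simp
  then have "C = shifted_coeff n (n+2) 0"
    unfolding C_def shifted_coeff_0 choose_central_shift_symmetric by (simp only:)
  then have C: "C = Cc * c"
    unfolding shifted_coeffs_even Cc_def c_def .
  have "excess_poly n (n+1) y \<le> c * (Cc / (real n + 1) + y - E * y^3)"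
    using excess_poly_even_le[OF n less_imp_le[OF y]]
    unfolding c_def Cc_def E_def by (simp add: divide_divide_eq_left mult.commute)
  then have h: "excess_poly n (n+1) y / c \<le> Cc / (real n + 1) + y - E * y^3"
    using c_pos by (simp add: divide_le_eq mult.commute)
  have "c * (Cc + a1 * y + a2 * y^2) \<le> P"
    using shifted_poly_even_ge[OF less_imp_le[OF y], of n]
    unfolding P_def c_def Cc_def a1_def a2_def .
  then have F: "Cc + a1 * y + a2 * y^2 \<le> P / c"
    using c_pos by (simp add: le_divide_eq mult.commute)
  have "excess_poly n (n+1) y / c * (real n + 1) * ((real n + 1) * Cc + P / c) < (real n + 2) * Cc * (P / c)"
    by (rule even_case_normalized_ineq[OF n y Cc_def a1_def a2_def E_def h F])
  then have "c^2 * (excess_poly n (n+1) y / c * (real n + 1) * ((real n + 1) * Cc + P / c))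
      < c^2 * ((real n + 2) * Cc * (P / c))"
    using c_pos by (intro mult_strict_left_mono) auto
  moreover have "c^2 * (excess_poly n (n+1) y / c * (real n + 1) * ((real n + 1) * Cc + P / c))
      = excess_poly n (n+1) y * (real n + 1) * ((real n + 1) * C + P)"
    unfolding C using c_pos by (simp add: field_simps power2_eq_square)
  moreover have "c^2 * ((real n + 2) * Cc * (P / c)) = (real n + 2) * C * P"
    unfolding C using c_pos by (simp add: field_simps power2_eq_square)
  ultimately show ?thesis by simp
qed

theorem lemma15:
  fixes d k :: nat and x :: real
  assumes "d \<ge> 5" and "k = k0 d" and "x > 1"
  shows "(x + 1) * deriv (fpoly d k) x / real k < (1 + eta d k x) * fpoly d k x"
proof -
  have y: "0 < x - 1" using assms(3) by simp
  obtain n where "d = 2*n + 1 \<and> k = n + 1 \<or> d = 2*n + 2 \<and> k = n + 2"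
  proof (cases "odd d")
    case True
    then show ?thesis
      using assms(2) by (intro that[of "d div 2"]) (auto simp: k0_def elim!: oddE)
  next
    case False
    then show ?thesis
      using assms(1,2) by (intro that[of "d div 2 - 1"]) (auto simp: k0_def elim!: evenE)
  qed
  then consider (odd) "d = 2*n + 1" "k = n + 1" | (even) "d = 2*n + 2" "k = n + 2"
    by blast
  then have "excess_poly (d - k) (k - 1) (x - 1) * real d
      * (real d * real (d choose k) + (2 * real k - real d) * shifted_poly (d - k) k (x - 1))
    < 2 * (2 * real k - real d) * real k * real (d choose k) * shifted_poly (d - k) k (x - 1)"
  proof cases
    case odd
    then have "1 \<le> n" using assms(1) by simp
    from excess_poly_odd_ineq[OF this y] show ?thesis
      unfolding odd by (simp add: algebra_simps)
  next
    case even
    then have "2 \<le> n" using assms(1) by simp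
    from excess_poly_even_ineq[OF this y] show ?thesis
      unfolding even by (simp add: algebra_simps)
  qed
  moreover have "0 < k" "k \<le> d" "d < 2 * k"
    using \<open>d = 2*n + 1 \<and> k = n + 1 \<or> d = 2*n + 2 \<and> k = n + 2\<close> by auto
  ultimately show ?thesis
    using fpoly_deriv_ineq_of_excess_ineq assms(3) by blast
qed

end
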